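(* Let $\boldsymbol{\pi}$ be any joint policy (written in conditional form as below). Then $$ J(\boldsymbol{\pi}_* ) - J(\boldsymbol{\pi}) = \frac{1}{1-\gamma} \sum_{m=1}^N \mathbb{E}_{s \sim \nu_*,\ \mathbf{a}^{1:m-1} \sim \boldsymbol{\pi}_*^{1:m-1}(\cdot|s)}\Big\langle Q_{\boldsymbol{\pi}}^{1:m}(s, \mathbf{a}^{1:m-1}, \cdot),\ \pi_*^m(\cdot|s,\mathbf{a}^{1:m-1}) - \pi^m(\cdot|s, \mathbf{a}^{1:m-1}) \Big\rangle, $$ where the inner product is over $a^m \in \mathcal{A}$.
   Context: A fully cooperative Markov game is a tuple $(\mathcal{N},\mathcal{S},\mathcal{A}^N,\mathcal{P},r,\gamma)$ with agents $\mathcal{N}=\{1,\dots,N\}$, finite state space $\mathcal{S}$, finite individual action space $\mathcal{A}$ (joint action space $\mathcal{A}^N$), transition kernel $\mathcal{P}(\cdot|s,\mathbf{a})$, common reward $r:\mathcal{S}\times\mathcal{A}^N\to[0,1]$ and discount $\gamma\in[0,1)$. For a set of agents $P$, $\mathbf{a}^P$ is their joint action; $\mathbf{a}^{1:m}=(a^1,\dots,a^m)$. Joint policies are written in sequential conditional form $\boldsymbol{\pi}(\mathbf{a}|s)=\prod_{m=1}^N \pi^m(a^m|s,\mathbf{a}^{1:m-1})$, and $\boldsymbol{\pi}^{1:m}(\cdot|s)$ denotes the induced distribution of $\mathbf{a}^{1:m}$. $V_{\boldsymbol{\pi}}(s)$ and $Q_{\boldsymbol{\pi}}(s,\mathbf{a})$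 are the usual discounted value and action-value functions. The multi-agent action value function of agents $1:m$ is $Q^{1:m}_{\boldsymbol{\pi}}(s,\mathbf{a}^{1:m})=\mathbb{E}_{\tilde{\mathbf{a}}}\,Q_{\boldsymbol{\pi}}(s,\mathbf{a}^{1:m},\tilde{\mathbf{a}})$, where $\tilde{\mathbf{a}}=\mathbf{a}^{m+1:N}$ is drawn from $\boldsymbol{\pi}$ (the remaining agents follow $\boldsymbol{\pi}$). $\boldsymbol{\pi}_*$ denotes an optimal joint policy and $\nu_*$ its stationary state distribution; the objective is $J(\boldsymbol{\pi})=\mathbb{E}_{s\sim\nu_*}V_{\boldsymbol{\pi}}(s)$. *)

theory Defs
  imports Complex_Main
begin

text \<open>
Agents are indexed 0..N-1 (agent i here is agent i+1 of the paper).
A joint action is a list of length N; a prefix a^{1:m} is a list of length m.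
A joint policy in sequential conditional form is pol :: nat => 's => 'a list => 'a => real,
where pol i s xs a = pol^{i+1}(a | s, xs) for prefixes xs of length i.
\<close>

definition lists_len :: "nat \<Rightarrow> 'a list set" where
  "lists_len k = {xs. length xs = k}"

definition pol_prefix :: "nat \<Rightarrow> (nat \<Rightarrow> 's \<Rightarrow> 'a list \<Rightarrow> 'a \<Rightarrow> real) \<Rightarrow> 's \<Rightarrow> 'a list \<Rightarrow> real" where
  "pol_prefix m pol s xs = (\<Prod>i<m. pol i s (take i xs) (xs ! i))"

definition pol_suffix :: "nat \<Rightarrow> nat \<Rightarrow> (nat \<Rightarrow> 's \<Rightarrow> 'a list \<Rightarrow> 'a \<Rightarrow> real) \<Rightarrow> 's \<Rightarrow> 'a list \<Rightarrow> real" where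
  "pol_suffix N m pol s as = (\<Prod>i\<in>{m..<N}. pol i s (take i as) (as ! i))"

definition is_markov_game :: "nat \<Rightarrow> ('s::finite \<Rightarrow> 'a list \<Rightarrow> 's \<Rightarrow> real) \<Rightarrow> ('s \<Rightarrow> 'a list \<Rightarrow> real) \<Rightarrow> real \<Rightarrow> bool" where
  "is_markov_game N P r \<gamma> \<longleftrightarrow> 0 \<le> \<gamma> \<and> \<gamma> < 1 \<and>
     (\<forall>s as. length as = N \<longrightarrow>
        (\<forall>s'. 0 \<le> P s as s') \<and> (\<Sum>s'\<in>UNIV. P s as s') = 1 \<and> 0 \<le> r s as \<and> r s as \<le> 1)"

definition is_policy :: "nat \<Rightarrow> (nat \<Rightarrow> 's \<Rightarrow> 'a::finite list \<Rightarrow> 'a \<Rightarrow> real) \<Rightarrow> bool" where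
  "is_policy N pol \<longleftrightarrow> (\<forall>i<N. \<forall>s xs. length xs = i \<longrightarrow>
       (\<forall>a. 0 \<le> pol i s xs a) \<and> (\<Sum>a\<in>UNIV. pol i s xs a) = 1)"

primrec exp_reward :: "nat \<Rightarrow> ('s::finite \<Rightarrow> 'a list \<Rightarrow> 's \<Rightarrow> real) \<Rightarrow> ('s \<Rightarrow> 'a list \<Rightarrow> real)
    \<Rightarrow> (nat \<Rightarrow> 's \<Rightarrow> 'a list \<Rightarrow> 'a \<Rightarrow> real) \<Rightarrow> nat \<Rightarrow> 's \<Rightarrow> real" where
  "exp_reward N P r pol 0 s = (\<Sum>as\<in>lists_len N. pol_prefix N pol s as * r s as)"
| "exp_reward N P r pol (Suc t) s =
     (\<Sum>as\<in>lists_len N. pol_prefix N pol s as * (\<Sum>s'\<in>UNIV. P s as s' * exp_reward N P r pol t s'))"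

definition Vf :: "nat \<Rightarrow> ('s::finite \<Rightarrow> 'a list \<Rightarrow> 's \<Rightarrow> real) \<Rightarrow> ('s \<Rightarrow> 'a list \<Rightarrow> real) \<Rightarrow> real
    \<Rightarrow> (nat \<Rightarrow> 's \<Rightarrow> 'a list \<Rightarrow> 'a \<Rightarrow> real) \<Rightarrow> 's \<Rightarrow> real" where
  "Vf N P r \<gamma> pol s = (\<Sum>t. \<gamma> ^ t * exp_reward N P r pol t s)"

definition Qf :: "nat \<Rightarrow> ('s::finite \<Rightarrow> 'a list \<Rightarrow> 's \<Rightarrow> real) \<Rightarrow> ('s \<Rightarrow> 'a list \<Rightarrow> real) \<Rightarrow> real
    \<Rightarrow> (nat \<Rightarrow> 's \<Rightarrow> 'a list \<Rightarrow> 'a \<Rightarrow> real) \<Rightarrow> 's \<Rightarrow> 'a list \<Rightarrow> real" where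
  "Qf N P r \<gamma> pol s as = r s as + \<gamma> * (\<Sum>s'\<in>UNIV. P s as s' * Vf N P r \<gamma> pol s')"

text \<open>Multi-agent action value Q^{1:m}_pi(s, xs) for a prefix xs of length m:
  the remaining agents m..N-1 follow pol.\<close>
definition Qm :: "nat \<Rightarrow> ('s::finite \<Rightarrow> 'a list \<Rightarrow> 's \<Rightarrow> real) \<Rightarrow> ('s \<Rightarrow> 'a list \<Rightarrow> real) \<Rightarrow> real
    \<Rightarrow> (nat \<Rightarrow> 's \<Rightarrow> 'a list \<Rightarrow> 'a \<Rightarrow> real) \<Rightarrow> 's \<Rightarrow> 'a list \<Rightarrow> real" where
  "Qm N P r \<gamma> pol s xs =
     (\<Sum>ys\<in>lists_len (N - length xs).
        pol_suffix N (length xs) pol s (xs @ ys) * Qf N P r \<gamma> pol s (xs @ ys))"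

definition is_optimal :: "nat \<Rightarrow> ('s::finite \<Rightarrow> 'a::finite list \<Rightarrow> 's \<Rightarrow> real) \<Rightarrow> ('s \<Rightarrow> 'a list \<Rightarrow> real) \<Rightarrow> real
    \<Rightarrow> (nat \<Rightarrow> 's \<Rightarrow> 'a list \<Rightarrow> 'a \<Rightarrow> real) \<Rightarrow> bool" where
  "is_optimal N P r \<gamma> pol \<longleftrightarrow> is_policy N pol \<and>
     (\<forall>pol'. is_policy N pol' \<longrightarrow> (\<forall>s. Vf N P r \<gamma> pol' s \<le> Vf N P r \<gamma> pol s))"

definition is_stationary :: "nat \<Rightarrow> ('s::finite \<Rightarrow> 'a list \<Rightarrow> 's \<Rightarrow> real)
    \<Rightarrow> (nat \<Rightarrow> 's \<Rightarrow> 'a list \<Rightarrow> 'a \<Rightarrow> real) \<Rightarrow> ('s \<Rightarrow> real) \<Rightarrow> bool" where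
  "is_stationary N P pol \<nu> \<longleftrightarrow> (\<forall>s. 0 \<le> \<nu> s) \<and> (\<Sum>s\<in>UNIV. \<nu> s) = 1 \<and>
     (\<forall>s'. (\<Sum>s\<in>UNIV. \<nu> s * (\<Sum>as\<in>lists_len N. pol_prefix N pol s as * P s as s')) = \<nu> s')"

definition Jf :: "('s::finite \<Rightarrow> real) \<Rightarrow> ('s \<Rightarrow> real) \<Rightarrow> real" where
  "Jf \<nu> V = (\<Sum>s\<in>UNIV. \<nu> s * V s)"

end

theory Submission
  imports Defs
begin

(*
  Write V and Q for the value functions of pi, and E_star[Q](s) for the expectation of Q(s, a) over
  joint actions a drawn from the optimal policy pi_star. Since nu_star is stationary for pi_star, the Bellman
  equations give the performance difference lemma
    J(pi_star) - J(pi) = 1/(1 - gamma) * E_{s ~ nu_star} [E_star[Q](s) - V(s)].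
  The advantage E_star[Q](s) - V(s) telescopes over the agents: the m-th intermediate quantity is the
  expectation of Q^{1:m}(s, a^{1:m}) over prefixes a^{1:m} drawn from pi_star^{1:m}. It equals V(s)
  for m = 0 and E_star[Q](s) for m = N, and its m-th increment is the m-th inner product of the
  theorem.
*)

lemma lists_len_0 [simp]: "lists_len 0 = {[]}"
  by (auto simp: lists_len_def)

lemma sum_lists_len_Suc_snoc:
  "sum f (lists_len (Suc m)) = (\<Sum>xs\<in>lists_len m. \<Sum>a\<in>UNIV. f (xs @ [a]))"
proof -
  have image: "lists_len (Suc m) = (\<lambda>(xs, a). xs @ [a]) ` (lists_len m \<times> UNIV)"
    by (auto simp: lists_len_def image_iff length_Suc_conv_rev)
  have inj: "inj_on (\<lambda>(xs, a). xs @ [a]) (lists_len m \<times> UNIV)"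
    by (auto simp: inj_on_def)
  have "sum f (lists_len (Suc m)) = (\<Sum>(xs, a)\<in>lists_len m \<times> UNIV. f (xs @ [a]))"
    unfolding image sum.reindex[OF inj] by (simp add: comp_def case_prod_unfold)
  then show ?thesis
    by (simp add: sum.cartesian_product')
qed

lemma sum_lists_len_Suc_Cons:
  "sum f (lists_len (Suc m)) = (\<Sum>a\<in>UNIV. \<Sum>xs\<in>lists_len m. f (a # xs))"
proof -
  have image: "lists_len (Suc m) = (\<lambda>(a, xs). a # xs) ` (UNIV \<times> lists_len m)"
    by (auto simp: lists_len_def image_iff length_Suc_conv)
  have inj: "inj_on (\<lambda>(a, xs). a # xs) (UNIV \<times> lists_len m)"
    by (auto simp: inj_on_def)
  have "sum f (lists_len (Suc m)) = (\<Sum>(a, xs)\<in>UNIV \<times> lists_len m. f (a # xs))"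
    unfolding image sum.reindex[OF inj] by (simp add: comp_def case_prod_unfold)
  then show ?thesis
    by (simp add: sum.cartesian_product')
qed

lemma sum_convex_combination_bounds:
  fixes w f :: "'b \<Rightarrow> real"
  assumes "\<And>x. x \<in> A \<Longrightarrow> 0 \<le> w x" "sum w A = 1" "\<And>x. x \<in> A \<Longrightarrow> 0 \<le> f x \<and> f x \<le> 1"
  shows "0 \<le> (\<Sum>x\<in>A. w x * f x) \<and> (\<Sum>x\<in>A. w x * f x) \<le> 1"
proof
  show "0 \<le> (\<Sum>x\<in>A. w x * f x)"
    using assms by (intro sum_nonneg) auto
  have "(\<Sum>x\<in>A. w x * f x) \<le> (\<Sum>x\<in>A. w x * 1)"
    using assms by (intro sum_mono mult_left_mono) auto
  then show "(\<Sum>x\<in>A. w x * f x) \<le> 1"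
    using assms(2) by simp
qed

lemma pol_prefix_snoc:
  assumes "length xs = m"
  shows "pol_prefix (Suc m) pol s (xs @ [a]) = pol_prefix m pol s xs * pol m s xs a"
  using assms unfolding pol_prefix_def by (auto simp: nth_append intro!: prod.cong)

lemma pol_prefix_nonneg:
  assumes "is_policy N pol" "m \<le> N" "m \<le> length xs"
  shows "0 \<le> pol_prefix m pol s xs"
  unfolding pol_prefix_def using assms by (intro prod_nonneg) (auto simp: is_policy_def)

lemma sum_pol_prefix:
  assumes "is_policy N pol" "m \<le> N"
  shows "(\<Sum>xs\<in>lists_len m. pol_prefix m pol s xs) = 1"
  using assms(2)
proof (induction m)
  case 0
  then show ?case by (simp add: pol_prefix_def)
next
  case (Suc m)
  have "(\<Sum>xs\<in>lists_len (Suc m). pol_prefix (Suc m) pol s xs)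
      = (\<Sum>xs\<in>lists_len m. pol_prefix m pol s xs * (\<Sum>a\<in>UNIV. pol m s xs a))"
    unfolding sum_lists_len_Suc_snoc
    by (intro sum.cong refl) (simp add: pol_prefix_snoc lists_len_def sum_distrib_left)
  also have "\<dots> = (\<Sum>xs\<in>lists_len m. pol_prefix m pol s xs)"
    using assms(1) Suc.prems by (intro sum.cong) (auto simp: is_policy_def lists_len_def)
  finally show ?case
    using Suc by simp
qed

context
  fixes N :: nat and P :: "'s::finite \<Rightarrow> 'a::finite list \<Rightarrow> 's \<Rightarrow> real"
    and r :: "'s \<Rightarrow> 'a list \<Rightarrow> real" and \<gamma> :: real
  assumes markov_game: "is_markov_game N P r \<gamma>"
begin

lemma exp_reward_bounds:
  assumes "is_policy N pol"
  shows "0 \<le> exp_reward N P r pol t s \<and> exp_reward N P r pol t s \<le> 1"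
proof (induction t arbitrary: s)
  case 0
  show ?case
    using markov_game assms unfolding exp_reward.simps
    by (intro sum_convex_combination_bounds pol_prefix_nonneg sum_pol_prefix)
       (auto simp: is_markov_game_def lists_len_def)
next
  case (Suc t)
  show ?case
    using markov_game assms Suc.IH unfolding exp_reward.simps
    by (intro sum_convex_combination_bounds pol_prefix_nonneg sum_pol_prefix)
       (auto simp: is_markov_game_def lists_len_def)
qed

lemma Vf_sums:
  assumes "is_policy N pol"
  shows "(\<lambda>t. \<gamma> ^ t * exp_reward N P r pol t s) sums Vf N P r \<gamma> pol s"
proof -
  have \<gamma>: "0 \<le> \<gamma>" "\<gamma> < 1"
    using markov_game by (auto simp: is_markov_game_def)
  have "summable (\<lambda>t. \<gamma> ^ t * exp_reward N P r pol t s)"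
  proof (rule summable_comparison_test')
    show "summable (\<lambda>t. \<gamma> ^ t)"
      using \<gamma> by (simp add: summable_geometric)
    show "norm (\<gamma> ^ t * exp_reward N P r pol t s) \<le> \<gamma> ^ t" for t
      using exp_reward_bounds[OF assms, of t s] \<gamma> by (simp add: mult_left_le)
  qed
  then show ?thesis
    unfolding Vf_def by (rule summable_sums)
qed

lemma Vf_eq_sum_Qf:
  assumes "is_policy N pol"
  shows "Vf N P r \<gamma> pol s = (\<Sum>as\<in>lists_len N. pol_prefix N pol s as * Qf N P r \<gamma> pol s as)"
proof -
  let ?e = "exp_reward N P r pol" and ?V = "Vf N P r \<gamma> pol"
  let ?tail = "\<Sum>as\<in>lists_len N. \<Sum>s'\<in>UNIV. \<gamma> * pol_prefix N pol s as * P s as s' * ?V s'"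
  have "(\<lambda>t. \<Sum>as\<in>lists_len N. \<Sum>s'\<in>UNIV. \<gamma> * pol_prefix N pol s as * P s as s' * (\<gamma> ^ t * ?e t s'))
      sums ?tail"
    by (intro sums_sum sums_mult Vf_sums[OF assms])
  then have "(\<lambda>t. \<gamma> ^ Suc t * ?e (Suc t) s) sums ?tail"
    by (simp add: sum_distrib_left mult_ac)
  then have "(\<lambda>t. \<gamma> ^ t * ?e t s) sums (?tail + ?e 0 s)"
    by (subst (asm) sums_Suc_iff) simp
  then have "?V s = ?tail + ?e 0 s"
    using Vf_sums[OF assms] sums_unique2 by blast
  then show ?thesis
    by (simp add: Qf_def distrib_left sum.distrib sum_distrib_left mult_ac)
qed

lemma stationary_sum_transition:
  assumes "is_stationary N P pol \<nu>"
  shows "(\<Sum>s\<in>UNIV. \<nu> s * (\<Sum>as\<in>lists_len N. pol_prefix N pol s as * (\<Sum>s'\<in>UNIV. P s as s' * f s')))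
    = (\<Sum>s'\<in>UNIV. \<nu> s' * f s')"
proof -
  have "(\<Sum>s\<in>UNIV. \<nu> s * (\<Sum>as\<in>lists_len N. pol_prefix N pol s as * (\<Sum>s'\<in>UNIV. P s as s' * f s')))
      = (\<Sum>s\<in>UNIV. \<Sum>as\<in>lists_len N. \<Sum>s'\<in>UNIV. \<nu> s * pol_prefix N pol s as * P s as s' * f s')"
    by (simp add: sum_distrib_left mult_ac)
  also have "\<dots> = (\<Sum>s'\<in>UNIV. \<Sum>s\<in>UNIV. \<Sum>as\<in>lists_len N. \<nu> s * pol_prefix N pol s as * P s as s' * f s')"
    by (subst sum.swap) (simp only: sum.swap[of _ "lists_len N"])
  also have "\<dots> = (\<Sum>s'\<in>UNIV. (\<Sum>s\<in>UNIV. \<nu> s * (\<Sum>as\<in>lists_len N. pol_prefix N pol s as * P s as s')) * f s')"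
    by (simp add: sum_distrib_left sum_distrib_right mult_ac)
  also have "\<dots> = (\<Sum>s'\<in>UNIV. \<nu> s' * f s')"
    using assms by (simp add: is_stationary_def)
  finally show ?thesis .
qed

lemma Qf_diff:
  "Qf N P r \<gamma> pol' s as - Qf N P r \<gamma> pol s as =
    \<gamma> * (\<Sum>s'\<in>UNIV. P s as s' * (Vf N P r \<gamma> pol' s' - Vf N P r \<gamma> pol s'))"
  unfolding Qf_def by (simp add: right_diff_distrib sum_subtractf)

lemma performance_difference:
  assumes "is_policy N pol'" "is_policy N pol" "is_stationary N P pol' \<nu>"
  shows "Jf \<nu> (Vf N P r \<gamma> pol') - Jf \<nu> (Vf N P r \<gamma> pol) = 1 / (1 - \<gamma>) *
    (\<Sum>s\<in>UNIV. \<nu> s *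
       ((\<Sum>as\<in>lists_len N. pol_prefix N pol' s as * Qf N P r \<gamma> pol s as) - Vf N P r \<gamma> pol s))"
proof -
  define D where "D s = Vf N P r \<gamma> pol' s - Vf N P r \<gamma> pol s" for s
  define A where "A s = (\<Sum>as\<in>lists_len N. pol_prefix N pol' s as * Qf N P r \<gamma> pol s as)
    - Vf N P r \<gamma> pol s" for s
  have D_eq: "D s = A s + \<gamma> * (\<Sum>as\<in>lists_len N. pol_prefix N pol' s as * (\<Sum>s'\<in>UNIV. P s as s' * D s'))"
    for s
  proof -
    have "D s - A s =
        (\<Sum>as\<in>lists_len N. pol_prefix N pol' s as * (Qf N P r \<gamma> pol' s as - Qf N P r \<gamma> pol s as))"
      unfolding D_def A_def Vf_eq_sum_Qf[OF assms(1), of s]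
      by (simp add: right_diff_distrib sum_subtractf)
    then show ?thesis
      unfolding Qf_diff D_def by (simp add: sum_distrib_left mult.left_commute)
  qed
  have "(\<Sum>s\<in>UNIV. \<nu> s * D s) = (\<Sum>s\<in>UNIV. \<nu> s * A s) + \<gamma> *
      (\<Sum>s\<in>UNIV. \<nu> s * (\<Sum>as\<in>lists_len N. pol_prefix N pol' s as * (\<Sum>s'\<in>UNIV. P s as s' * D s')))"
    by (subst D_eq) (simp add: distrib_left sum.distrib sum_distrib_left mult.left_commute)
  also have "\<dots> = (\<Sum>s\<in>UNIV. \<nu> s * A s) + \<gamma> * (\<Sum>s\<in>UNIV. \<nu> s * D s)"
    unfolding stationary_sum_transition[OF assms(3)] ..
  finally have "(\<Sum>s\<in>UNIV. \<nu> s * D s) = (\<Sum>s\<in>UNIV. \<nu> s * A s) + \<gamma> * (\<Sum>s\<in>UNIV. \<nu> s * D s)" .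
  moreover have "\<gamma> < 1"
    using markov_game by (simp add: is_markov_game_def)
  ultimately have "(\<Sum>s\<in>UNIV. \<nu> s * D s) = 1 / (1 - \<gamma>) * (\<Sum>s\<in>UNIV. \<nu> s * A s)"
    by (simp add: field_simps)
  then show ?thesis
    unfolding Jf_def D_def A_def by (simp add: sum_subtractf[symmetric] right_diff_distrib)
qed

end

lemma pol_suffix_Suc:
  assumes "m < N"
  shows "pol_suffix N m pol s as = pol m s (take m as) (as ! m) * pol_suffix N (Suc m) pol s as"
  unfolding pol_suffix_def using assms by (simp add: prod.atLeast_Suc_lessThan)

lemma Qm_eq_sum_snoc:
  assumes "length xs = m" "m < N"
  shows "Qm N P r \<gamma> pol s xs = (\<Sum>a\<in>UNIV. pol m s xs a * Qm N P r \<gamma> pol s (xs @ [a]))"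
proof -
  have N_minus: "N - m = Suc (N - Suc m)"
    using assms by simp
  have "Qm N P r \<gamma> pol s xs = (\<Sum>a\<in>UNIV. \<Sum>zs\<in>lists_len (N - Suc m).
      pol_suffix N m pol s (xs @ a # zs) * Qf N P r \<gamma> pol s (xs @ a # zs))"
    unfolding Qm_def assms(1) N_minus sum_lists_len_Suc_Cons ..
  also have "\<dots> = (\<Sum>a\<in>UNIV. pol m s xs a * (\<Sum>zs\<in>lists_len (N - Suc m).
      pol_suffix N (Suc m) pol s ((xs @ [a]) @ zs) * Qf N P r \<gamma> pol s ((xs @ [a]) @ zs)))"
    using assms by (simp add: pol_suffix_Suc nth_append sum_distrib_left mult.assoc)
  finally show ?thesis
    using assms(1) by (simp add: Qm_def)
qed

lemma Qm_full_length:
  assumes "length as = N"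
  shows "Qm N P r \<gamma> pol s as = Qf N P r \<gamma> pol s as"
  unfolding Qm_def pol_suffix_def using assms by simp

lemma Qm_Nil:
  assumes "is_markov_game N P r \<gamma>" "is_policy N pol"
  shows "Qm N P r \<gamma> pol s [] = Vf N P r \<gamma> pol s"
  unfolding Vf_eq_sum_Qf[OF assms] Qm_def pol_suffix_def pol_prefix_def
  by (simp add: atLeast0LessThan)

definition prefix_Qm :: "nat \<Rightarrow> ('s::finite \<Rightarrow> 'a list \<Rightarrow> 's \<Rightarrow> real) \<Rightarrow> ('s \<Rightarrow> 'a list \<Rightarrow> real)
    \<Rightarrow> real \<Rightarrow> (nat \<Rightarrow> 's \<Rightarrow> 'a list \<Rightarrow> 'a \<Rightarrow> real) \<Rightarrow> (nat \<Rightarrow> 's \<Rightarrow> 'a list \<Rightarrow> 'a \<Rightarrow> real)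
    \<Rightarrow> nat \<Rightarrow> 's \<Rightarrow> real" where
  "prefix_Qm N P r \<gamma> pol' pol m s =
     (\<Sum>xs\<in>lists_len m. pol_prefix m pol' s xs * Qm N P r \<gamma> pol s xs)"

lemma prefix_Qm_0:
  assumes "is_markov_game N P r \<gamma>" "is_policy N pol"
  shows "prefix_Qm N P r \<gamma> pol' pol 0 s = Vf N P r \<gamma> pol s"
  by (simp add: prefix_Qm_def pol_prefix_def Qm_Nil[OF assms])

lemma prefix_Qm_full_length:
  "prefix_Qm N P r \<gamma> pol' pol N s =
     (\<Sum>as\<in>lists_len N. pol_prefix N pol' s as * Qf N P r \<gamma> pol s as)"
  unfolding prefix_Qm_def by (intro sum.cong refl) (simp add: Qm_full_length lists_len_def)

lemma prefix_Qm_Suc_diff: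
  assumes "m < N"
  shows "prefix_Qm N P r \<gamma> pol' pol (Suc m) s - prefix_Qm N P r \<gamma> pol' pol m s =
    (\<Sum>xs\<in>lists_len m. pol_prefix m pol' s xs *
       (\<Sum>a\<in>UNIV. Qm N P r \<gamma> pol s (xs @ [a]) * (pol' m s xs a - pol m s xs a)))"
proof -
  have "prefix_Qm N P r \<gamma> pol' pol (Suc m) s = (\<Sum>xs\<in>lists_len m. pol_prefix m pol' s xs *
      (\<Sum>a\<in>UNIV. pol' m s xs a * Qm N P r \<gamma> pol s (xs @ [a])))"
    unfolding prefix_Qm_def sum_lists_len_Suc_snoc
    by (intro sum.cong refl) (simp add: pol_prefix_snoc lists_len_def sum_distrib_left mult.assoc)
  moreover have "prefix_Qm N P r \<gamma> pol' pol m s = (\<Sum>xs\<in>lists_len m. pol_prefix m pol' s xs *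
      (\<Sum>a\<in>UNIV. pol m s xs a * Qm N P r \<gamma> pol s (xs @ [a])))"
    unfolding prefix_Qm_def using assms
    by (intro sum.cong refl) (simp add: Qm_eq_sum_snoc[symmetric] lists_len_def)
  ultimately show ?thesis
    by (simp add: algebra_simps sum_subtractf)
qed

theorem lemma1:
  fixes N :: nat
    and P :: "'s::finite \<Rightarrow> 'a::finite list \<Rightarrow> 's \<Rightarrow> real"
    and r :: "'s \<Rightarrow> 'a list \<Rightarrow> real"
    and \<gamma> :: real
    and pol_star pol :: "nat \<Rightarrow> 's \<Rightarrow> 'a list \<Rightarrow> 'a \<Rightarrow> real"
    and \<nu> :: "'s \<Rightarrow> real"
  assumes "is_markov_game N P r \<gamma>"
    and "is_optimal N P r \<gamma> pol_star"
    and "is_stationary N P pol_star \<nu>"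
    and "is_policy N pol"
  shows "Jf \<nu> (Vf N P r \<gamma> pol_star) - Jf \<nu> (Vf N P r \<gamma> pol) =
    1 / (1 - \<gamma>) * (\<Sum>m<N. \<Sum>s\<in>UNIV. \<nu> s *
       (\<Sum>xs\<in>lists_len m. pol_prefix m pol_star s xs *
          (\<Sum>a\<in>UNIV. Qm N P r \<gamma> pol s (xs @ [a]) * (pol_star m s xs a - pol m s xs a))))"
proof -
  have "is_policy N pol_star"
    using assms(2) by (simp add: is_optimal_def)
  note difference = performance_difference[OF assms(1) this assms(4,3)]
  let ?T = "prefix_Qm N P r \<gamma> pol_star pol"
  have "(\<Sum>as\<in>lists_len N. pol_prefix N pol_star s as * Qf N P r \<gamma> pol s as) - Vf N P r \<gamma> pol s
      = (\<Sum>m<N. ?T (Suc m) s - ?T m s)" for s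
    by (simp only: sum_lessThan_telescope[of "\<lambda>m. ?T m s"] prefix_Qm_full_length
        prefix_Qm_0[OF assms(1,4)])
  then show ?thesis
    unfolding difference
    by (simp add: prefix_Qm_Suc_diff sum_distrib_left sum.swap[where B = "{..<N}"])
qed

end
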